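(* Let $n\ge1$, $q\in\mathbb{C}$ with $0<|q|<1$, and $0<r<\frac{1-|q|}{|1-q|}$. Then $$\sum_{\sigma\in\mathbb{S}_n}\Big(\frac{1}{2\pi i}\Big)^n\oint_{\mathcal{C}_r}\cdots\oint_{\mathcal{C}_r}A_\sigma\prod_{i=1}^n z_i^{-1}\,dz_1\cdots dz_n=[n]_q!.$$
   Context: $\mathcal{C}_r$ is the positively oriented circle of radius $r$ centered at $0$. $[k]_q=1+q+\cdots+q^{k-1}$, $[n]_q!=[1]_q[2]_q\cdots[n]_q$. For $1\le\alpha<\beta\le n$ put $S_{\beta\alpha}=S_{\beta\alpha}(z_\alpha,z_\beta)=-\dfrac{z_\beta-qz_\alpha-(1-q)z_\alpha z_\beta}{z_\alpha-qz_\beta-(1-q)z_\alpha z_\beta}$. An inversion of $\sigma\in\mathbb{S}_n$ is a pair $(\alpha,\beta)$ with $1\le\alpha<\beta\le n$ and $\sigma^{-1}(\beta)<\sigma^{-1}(\alpha)$ (i.e. $\beta$ appears before $\alpha$ in the word $\sigma(1)\sigma(2)\cdots\sigma(n)$). $A_\sigma=\prod_{(\alpha,\beta)\text{ inversion of }\sigma}S_{\beta\alpha}$ (so $A_{\mathrm{Id}}=1$). *)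

theory Defs
  imports "HOL-Analysis.Analysis" "HOL-Combinatorics.Permutations"
begin

text \<open>(1/(2 pi i)) is not included here: circle_integral r f is the contour integral
  of f over the positively oriented circle of radius r centred at 0, parametrised by
  t \<mapsto> r e^{it}, t in [0, 2 pi]: integral of f(gamma t) * gamma'(t).\<close>
definition circle_integral :: "real \<Rightarrow> (complex \<Rightarrow> complex) \<Rightarrow> complex" where
  "circle_integral r f =
     integral {0..2*pi} (\<lambda>t. f (of_real r * exp (\<i> * of_real t)) * (\<i> * of_real r * exp (\<i> * of_real t)))"

text \<open>Iterated n-fold circle integral of F in the variables z 1, ..., z n
  (innermost integral in z 1, outermost in z n).\<close>
fun multi_circle_integral :: "real \<Rightarrow> nat \<Rightarrow> ((nat \<Rightarrow> complex) \<Rightarrow> complex) \<Rightarrow> complex" where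
  "multi_circle_integral r 0 F = F (\<lambda>_. 0)"
| "multi_circle_integral r (Suc n) F =
     circle_integral r (\<lambda>w. multi_circle_integral r n (\<lambda>z. F (z(Suc n := w))))"

definition S_fac :: "complex \<Rightarrow> complex \<Rightarrow> complex \<Rightarrow> complex" where
  "S_fac q za zb = - (zb - q * za - (1 - q) * za * zb) / (za - q * zb - (1 - q) * za * zb)"

definition inversions :: "nat \<Rightarrow> (nat \<Rightarrow> nat) \<Rightarrow> (nat \<times> nat) set" where
  "inversions n \<sigma> = {(a, b). 1 \<le> a \<and> a < b \<and> b \<le> n \<and> inv \<sigma> b < inv \<sigma> a}"

definition A_sigma :: "complex \<Rightarrow> nat \<Rightarrow> (nat \<Rightarrow> nat) \<Rightarrow> (nat \<Rightarrow> complex) \<Rightarrow> complex" where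
  "A_sigma q n \<sigma> z = (\<Prod>(a, b)\<in>inversions n \<sigma>. S_fac q (z a) (z b))"

definition qint :: "complex \<Rightarrow> nat \<Rightarrow> complex" where
  "qint q k = (\<Sum>j<k. q ^ j)"

definition qfact :: "complex \<Rightarrow> nat \<Rightarrow> complex" where
  "qfact q n = (\<Prod>k=1..n. qint q k)"

end

theory Submission
  imports Defs "HOL-Complex_Analysis.Cauchy_Integral_Formula"
begin

(*
  For |z_a| = r the map S(z_a, -) is
  holomorphic on the closed disc of radius r, because |q| + |1 - q| r < 1 keeps its pole outside,
  and S(z_a, 0) = q. Integrating first in the variable z_n, Cauchy's formula replaces each of the
  factors S(z_a, z_n) by q, and induction on n gives that the normalised integral of
  A_sigma * prod z_i^-1 is q^inv(sigma). Finally, the sum of q^inv(sigma) over all permutations is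
  [n]_q!: removing the letter n from the word sigma deletes exactly one inversion for each letter
  after it.

  As a function of z_1 instead, S(z_1, z_b) has its pole inside the circle; since z_n is the
  outermost variable of the iterated integral, it is first moved innermost by Fubini's theorem for
  continuous integrands.
*)

section \<open>Circle integrals\<close>

lemma norm_circle_point [simp]: "0 \<le> r \<Longrightarrow> cmod (of_real r * exp (\<i> * of_real t)) = r"
  by (simp add: norm_mult)

lemma circle_integral_cong:
  assumes "\<And>w. cmod w = r \<Longrightarrow> f w = g w" "0 \<le> r"
  shows "circle_integral r f = circle_integral r g"
  unfolding circle_integral_def using assms by (intro integral_cong) auto

lemma circle_integral_cmult: "circle_integral r (\<lambda>w. c * f w) = c * circle_integral r f"
  unfolding circle_integral_def by (simp add: mult.assoc integral_mult_right)

lemma circle_integral_Cauchy: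
  assumes "f holomorphic_on cball 0 r" "0 < r"
  shows "circle_integral r (\<lambda>w. f w / w) = 2 * of_real pi * \<i> * f 0"
proof -
  have "((\<lambda>w. f w / (w - 0)) has_contour_integral 2 * of_real pi * \<i> * f 0) (circlepath 0 r)"
    using Cauchy_integral_circlepath_simple[of f 0 r 0] assms by simp
  then have "integral {0..2*pi} (\<lambda>t. f (r * cis t) / (r * cis t) * r * \<i> * cis t) =
               2 * of_real pi * \<i> * f 0"
    by (simp add: circlepath_def has_contour_integral_part_circlepath_iff integral_unique)
  then show ?thesis
    unfolding circle_integral_def cis_conv_exp by (simp only: mult_ac)
qed

lemma continuous_on_circle_integral:
  assumes "continuous_on (P \<times> sphere 0 r) K" "0 \<le> r"
  shows "continuous_on P (\<lambda>p. circle_integral r (\<lambda>w. K (p, w)))"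
  unfolding circle_integral_def cbox_interval[symmetric]
proof (rule integral_continuous_on_param)
  have "continuous_on (P \<times> cbox 0 (2*pi)) (\<lambda>x. K (fst x, of_real r * exp (\<i> * of_real (snd x))))"
    by (rule continuous_on_compose2[OF assms(1)]) (auto intro!: continuous_intros simp: assms(2))
  then show "continuous_on (P \<times> cbox 0 (2*pi))
      (\<lambda>(p, t). K (p, of_real r * exp (\<i> * of_real t)) * (\<i> * of_real r * exp (\<i> * of_real t)))"
    by (auto simp: case_prod_unfold intro!: continuous_intros)
qed

lemma circle_integral_swap:
  assumes "continuous_on (sphere 0 r \<times> sphere 0 r) (\<lambda>(u, w). K u w)" "0 \<le> r"
  shows "circle_integral r (\<lambda>u. circle_integral r (\<lambda>w. K u w)) =
         circle_integral r (\<lambda>w. circle_integral r (\<lambda>u. K u w))"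
proof -
  define \<gamma> where "\<gamma> t = of_real r * exp (\<i> * of_real t)" for t :: real
  define \<gamma>' where "\<gamma>' t = \<i> * of_real r * exp (\<i> * of_real t)" for t :: real
  have "continuous_on (cbox (0, 0) (2*pi, 2*pi)) (\<lambda>x. K (\<gamma> (fst x)) (\<gamma> (snd x)))"
    by (rule continuous_on_compose2[OF assms(1), where f = "\<lambda>x. (\<gamma> (fst x), \<gamma> (snd x))", simplified])
       (auto intro!: continuous_intros simp: \<gamma>_def assms(2))
  then have "continuous_on (cbox (0, 0) (2*pi, 2*pi)) (\<lambda>(s, t). K (\<gamma> s) (\<gamma> t) * \<gamma>' t * \<gamma>' s)"
    by (auto simp: case_prod_unfold \<gamma>'_def intro!: continuous_intros)
  from integral_swap_continuous[OF this] show ?thesis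
    unfolding circle_integral_def \<gamma>_def[symmetric] \<gamma>'_def[symmetric]
    by (simp add: cbox_interval integral_mult_left ac_simps)
qed

section \<open>Iterated circle integrals\<close>

text \<open>The points at which multi_circle_integral r m evaluates its integrand.\<close>

definition torus :: "real \<Rightarrow> nat \<Rightarrow> (nat \<Rightarrow> complex) set" where
  "torus r m = {z. (\<forall>i\<in>{1..m}. cmod (z i) = r) \<and> (\<forall>i. i \<notin> {1..m} \<longrightarrow> z i = 0)}"

lemma torus_0 [simp]: "torus r 0 = {\<lambda>_. 0}"
  by (auto simp: torus_def)

lemma fun_upd_in_torus: "z \<in> torus r m \<Longrightarrow> cmod w = r \<Longrightarrow> z(Suc m := w) \<in> torus r (Suc m)"
  by (auto simp: torus_def le_Suc_eq)

lemma multi_circle_integral_cmult: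
  "multi_circle_integral r m (\<lambda>z. c * F z) = c * multi_circle_integral r m F"
  by (induction m arbitrary: F) (simp_all add: circle_integral_cmult)

lemma multi_circle_integral_cong:
  assumes "\<And>z. z \<in> torus r m \<Longrightarrow> F z = G z" "0 \<le> r"
  shows "multi_circle_integral r m F = multi_circle_integral r m G"
  using assms(1)
proof (induction m arbitrary: F G)
  case (Suc m)
  have "circle_integral r (\<lambda>w. multi_circle_integral r m (\<lambda>z. F (z(Suc m := w)))) =
        circle_integral r (\<lambda>w. multi_circle_integral r m (\<lambda>z. G (z(Suc m := w))))"
  proof (rule circle_integral_cong)
    fix w :: complex assume "cmod w = r"
    then show "multi_circle_integral r m (\<lambda>z. F (z(Suc m := w))) =
               multi_circle_integral r m (\<lambda>z. G (z(Suc m := w)))"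
      by (intro Suc.IH Suc.prems fun_upd_in_torus)
  qed (fact assms(2))
  then show ?case by simp
qed simp

lemma continuous_on_coordinate [continuous_intros]: "continuous_on S (\<lambda>z. z i)"
  by (rule continuous_on_subset[OF continuous_on_product_coordinates]) simp

lemma continuous_on_fun_upd:
  fixes f :: "'a::topological_space \<Rightarrow> 'i \<Rightarrow> 'b::topological_space"
  assumes "continuous_on S f" "continuous_on S g"
  shows "continuous_on S (\<lambda>x. (f x)(k := g x))"
proof (rule continuous_on_coordinatewise_then_product)
  fix i show "continuous_on S (\<lambda>x. ((f x)(k := g x)) i)"
    using assms continuous_on_product_then_coordinatewise[OF assms(1), of i]
    by (cases "i = k") auto
qed

lemma override_on_fun_upd_Suc:
  "override_on y (z(Suc m := w)) {1..Suc m} = override_on (y(Suc m := w)) z {1..m}"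
  by (auto simp: override_on_def fun_eq_iff le_Suc_eq)

text \<open>The parameter y supplies the coordinates outside {1..m}, i.e. the variables of enclosing
  integrals; letting them vary is what makes the induction go through.\<close>

lemma continuous_on_multi_circle_integral:
  assumes "continuous_on {override_on y z {1..m} | y z. y \<in> Y \<and> z \<in> torus r m} F" "0 \<le> r"
  shows "continuous_on Y (\<lambda>y. multi_circle_integral r m (\<lambda>z. F (override_on y z {1..m})))"
  using assms(1)
proof (induction m arbitrary: Y)
  case 0
  have "{override_on y z {1..0} | y z. y \<in> Y \<and> z \<in> torus r 0} = Y"
    by simp
  with 0 show ?case by simp
next
  case (Suc m)
  define Y' where "Y' = (\<lambda>p. (fst p)(Suc m := snd p)) ` (Y \<times> sphere 0 r)"
  have "continuous_on Y' (\<lambda>y. multi_circle_integral r m (\<lambda>z. F (override_on y z {1..m})))"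
  proof (rule Suc.IH, rule continuous_on_subset[OF Suc.prems], clarify)
    fix y' z assume "y' \<in> Y'" and z: "z \<in> torus r m"
    then obtain y w where "y \<in> Y" "cmod w = r" "y' = y(Suc m := w)"
      by (auto simp: Y'_def)
    then show "\<exists>y'' z'. override_on y' z {1..m} = override_on y'' z' {1..Suc m} \<and>
        y'' \<in> Y \<and> z' \<in> torus r (Suc m)"
      using fun_upd_in_torus[OF z] override_on_fun_upd_Suc by metis
  qed
  moreover have "continuous_on (Y \<times> sphere 0 r) (\<lambda>p. (fst p)(Suc m := snd p))"
    by (rule continuous_on_fun_upd; intro continuous_intros)
  ultimately have "continuous_on (Y \<times> sphere 0 r)
      (\<lambda>p. multi_circle_integral r m (\<lambda>z. F (override_on ((fst p)(Suc m := snd p)) z {1..m})))"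
    using continuous_on_compose[of "Y \<times> sphere 0 r" "\<lambda>p. (fst p)(Suc m := snd p)"]
    by (simp add: o_def Y'_def)
  from continuous_on_circle_integral[OF this assms(2)] show ?case
    unfolding multi_circle_integral.simps override_on_fun_upd_Suc by simp
qed

lemma circle_integral_multi_circle_integral_swap:
  assumes "k \<notin> {1..m}" "0 \<le> r"
    and "continuous_on {z(k := w) | z w. z \<in> torus r m \<and> w \<in> sphere 0 r} F"
  shows "circle_integral r (\<lambda>w. multi_circle_integral r m (\<lambda>z. F (z(k := w)))) =
         multi_circle_integral r m (\<lambda>z. circle_integral r (\<lambda>w. F (z(k := w))))"
  using assms(1,3)
proof (induction m arbitrary: F)
  case 0
  then show ?case by simp
next
  case (Suc m)
  have k: "k \<noteq> Suc m" "k \<notin> {1..m}"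
    using Suc.prems(1) by auto
  define K where "K u w = multi_circle_integral r m (\<lambda>z. F (z(Suc m := u, k := w)))" for u w
  have override_eq: "z(Suc m := u, k := w) = override_on ((\<lambda>_. 0)(Suc m := u, k := w)) z {1..m}"
    if "z \<in> torus r m" for z and u w :: complex
    using that k by (auto simp: torus_def override_on_def fun_eq_iff)
  have K_override: "K u w = multi_circle_integral r m
      (\<lambda>z. F (override_on ((\<lambda>_. 0)(Suc m := u, k := w)) z {1..m}))" for u w :: complex
    unfolding K_def by (intro multi_circle_integral_cong assms(2) arg_cong[where f = F] override_eq)
  define \<iota> where "\<iota> p = (\<lambda>_. 0)(Suc m := fst p, k := snd p)" for p :: "complex \<times> complex"
  have "continuous_on {override_on y z {1..m} | y z. y \<in> \<iota> ` (sphere 0 r \<times> sphere 0 r) \<and> z \<in> torus r m} F"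
  proof (rule continuous_on_subset[OF Suc.prems(2)], clarify)
    fix u w :: complex and z assume "u \<in> sphere 0 r" "w \<in> sphere 0 r" and z: "z \<in> torus r m"
    then show "\<exists>z' w'. override_on (\<iota> (u, w)) z {1..m} = z'(k := w') \<and>
        z' \<in> torus r (Suc m) \<and> w' \<in> sphere 0 r"
      unfolding \<iota>_def fst_conv snd_conv override_eq[OF z, symmetric] using fun_upd_in_torus[OF z] by auto
  qed
  from continuous_on_multi_circle_integral[OF this assms(2)]
  have "continuous_on (\<iota> ` (sphere 0 r \<times> sphere 0 r))
      (\<lambda>y. multi_circle_integral r m (\<lambda>z. F (override_on y z {1..m})))" .
  moreover have "continuous_on (sphere 0 r \<times> sphere 0 r) \<iota>"
    unfolding \<iota>_def
    by (intro continuous_on_fun_upd continuous_on_const continuous_on_fst continuous_on_snd continuous_on_id)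
  ultimately have K_cont: "continuous_on (sphere 0 r \<times> sphere 0 r) (\<lambda>p. K (fst p) (snd p))"
    using continuous_on_compose[of "sphere 0 r \<times> sphere 0 r" \<iota>] by (simp add: o_def K_override \<iota>_def)
  have inner: "circle_integral r (\<lambda>w. K u w) =
      multi_circle_integral r m (\<lambda>z. circle_integral r (\<lambda>w. F (z(Suc m := u, k := w))))"
    if "u \<in> sphere 0 r" for u :: complex
    unfolding K_def fun_upd_twist[OF k(1)[symmetric]]
  proof (rule Suc.IH[OF k(2)], rule continuous_on_compose2[OF Suc.prems(2)])
    show "continuous_on {z(k := w) | z w. z \<in> torus r m \<and> w \<in> sphere 0 r} (\<lambda>x. x(Suc m := u))"
      by (intro continuous_on_fun_upd continuous_on_id continuous_on_const)
    show "(\<lambda>x. x(Suc m := u)) ` {z(k := w) | z w. z \<in> torus r m \<and> w \<in> sphere 0 r}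
        \<subseteq> {z(k := w) | z w. z \<in> torus r (Suc m) \<and> w \<in> sphere 0 r}"
    proof clarify
      fix z and w :: complex assume z: "z \<in> torus r m" and "w \<in> sphere 0 r"
      then show "\<exists>z' w'. z(k := w, Suc m := u) = z'(k := w') \<and>
          z' \<in> torus r (Suc m) \<and> w' \<in> sphere 0 r"
        using that fun_upd_in_torus[OF z, of u] fun_upd_twist[OF k(1)] by (intro exI[of _ "z(Suc m := u)"] exI[of _ w]) auto
    qed
  qed
  from K_cont have "circle_integral r (\<lambda>w. circle_integral r (\<lambda>u. K u w)) =
             circle_integral r (\<lambda>u. circle_integral r (\<lambda>w. K u w))"
    by (intro circle_integral_swap[symmetric] assms(2)) (simp add: case_prod_unfold)
  also have "\<dots> = circle_integral r
      (\<lambda>u. multi_circle_integral r m (\<lambda>z. circle_integral r (\<lambda>w. F (z(Suc m := u, k := w)))))"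
    using inner by (intro circle_integral_cong assms(2)) simp
  finally show ?case
    by (simp only: multi_circle_integral.simps K_def)
qed

section \<open>Inversions and their generating function\<close>

definition inversion_pairs :: "nat \<Rightarrow> (nat \<Rightarrow> nat) \<Rightarrow> (nat \<times> nat) set" where
  "inversion_pairs n \<tau> = {(a, b). 1 \<le> a \<and> a < b \<and> b \<le> n \<and> \<tau> b < \<tau> a}"

lemma inversions_eq_inversion_pairs: "inversions n \<sigma> = inversion_pairs n (inv \<sigma>)"
  by (simp add: inversions_def inversion_pairs_def)

lemma inversion_pairs_subset: "inversion_pairs n \<tau> \<subseteq> {1..n} \<times> {1..n}"
  by (auto simp: inversion_pairs_def)

lemma finite_inversion_pairs [simp]: "finite (inversion_pairs n \<tau>)"
  using inversion_pairs_subset by (rule finite_subset) simp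

lemma inversion_pairs_0 [simp]: "inversion_pairs 0 \<tau> = {}"
  by (auto simp: inversion_pairs_def)

lemma inversion_pairs_Suc:
  "inversion_pairs (Suc m) \<tau> =
     inversion_pairs m \<tau> \<union> (\<lambda>a. (a, Suc m)) ` {a \<in> {1..m}. \<tau> (Suc m) < \<tau> a}"
  by (auto simp: inversion_pairs_def le_Suc_eq)

lemma last_pair_notin_inversion_pairs [simp]: "(a, Suc m) \<notin> inversion_pairs m \<tau>"
  by (simp add: inversion_pairs_def)

lemma prod_inversion_pairs_Suc:
  "(\<Prod>p\<in>inversion_pairs (Suc m) \<tau>. f p) =
     (\<Prod>p\<in>inversion_pairs m \<tau>. f p) * (\<Prod>a\<in>{a \<in> {1..m}. \<tau> (Suc m) < \<tau> a}. f (a, Suc m))"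
  unfolding inversion_pairs_Suc
  by (subst prod.union_disjoint) (auto simp: prod.reindex inj_on_def)

lemma card_inversion_pairs_Suc:
  "card (inversion_pairs (Suc m) \<tau>) =
     card (inversion_pairs m \<tau>) + card {a \<in> {1..m}. \<tau> (Suc m) < \<tau> a}"
  unfolding inversion_pairs_Suc
  by (subst card_Un_disjoint) (auto simp: card_image inj_on_def)

lemma sum_power_card_greater:
  fixes V :: "'a::linorder set"
  assumes "finite V"
  shows "(\<Sum>v\<in>V. q ^ card {u \<in> V. v < u}) = qint q (card V)"
  using assms
proof (induction V rule: finite_linorder_min_induct)
  case empty
  then show ?case by (simp add: qint_def)
next
  case (insert b A)
  have "b \<notin> A" "{u \<in> insert b A. b < u} = A"
    using insert.hyps(2) by auto
  moreover have "{u \<in> insert b A. v < u} = {u \<in> A. v < u}" if "v \<in> A" for v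
    using insert.hyps(2) that by auto
  ultimately have "(\<Sum>v\<in>insert b A. q ^ card {u \<in> insert b A. v < u}) =
      q ^ card A + (\<Sum>v\<in>A. q ^ card {u \<in> A. v < u})"
    using insert.hyps(1) by (simp cong: sum.cong)
  also have "\<dots> = qint q (card (insert b A))"
    using insert.IH insert.hyps(1) \<open>b \<notin> A\<close> by (simp add: qint_def)
  finally show ?case .
qed

definition enumerations :: "nat \<Rightarrow> nat set \<Rightarrow> (nat \<Rightarrow> nat) set" where
  "enumerations n V = {\<tau>. bij_betw \<tau> {1..n} V \<and> (\<forall>a. a \<notin> {1..n} \<longrightarrow> \<tau> a = a)}"

lemma enumerations_interval: "enumerations n {1..n} = {\<sigma>. \<sigma> permutes {1..n}}"
  by (auto simp: enumerations_def permutes_imp_bij permutes_not_in intro: bij_imp_permutes)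

lemma finite_enumerations: "finite V \<Longrightarrow> finite (enumerations n V)"
proof (rule inj_on_finite[where f = "\<lambda>\<tau>. restrict \<tau> {1..n}" and B = "{1..n} \<rightarrow>\<^sub>E V"])
  show "inj_on (\<lambda>\<tau>. restrict \<tau> {1..n}) (enumerations n V)"
    by (auto simp: inj_on_def enumerations_def fun_eq_iff restrict_def) metis
  show "(\<lambda>\<tau>. restrict \<tau> {1..n}) ` enumerations n V \<subseteq> {1..n} \<rightarrow>\<^sub>E V"
    by (auto simp: enumerations_def bij_betw_def)
qed (simp add: finite_PiE)

lemma bij_betw_fun_upd_Suc_iff:
  assumes "v \<in> V"
  shows "bij_betw (\<tau>(Suc m := v)) {1..Suc m} V \<longleftrightarrow> bij_betw \<tau> {1..m} (V - {v})"
proof -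
  have "bij_betw \<tau> {1..m} (V - {v}) \<longleftrightarrow> bij_betw (\<tau>(Suc m := v)) {1..m} (V - {v})"
    by (rule bij_betw_cong) simp
  also have "\<dots> \<longleftrightarrow>
      bij_betw (\<tau>(Suc m := v)) ({1..m} \<union> {Suc m}) ((V - {v}) \<union> {(\<tau>(Suc m := v)) (Suc m)})"
    by (rule notIn_Un_bij_betw3) auto
  also have "\<dots> \<longleftrightarrow> bij_betw (\<tau>(Suc m := v)) {1..Suc m} V"
    using assms by (simp add: atLeastAtMostSuc_conv insert_absorb)
  finally show ?thesis ..
qed

lemma bij_betw_enumerations_Suc:
  "bij_betw (\<lambda>(v, \<tau>). \<tau>(Suc m := v)) (SIGMA v:V. enumerations m (V - {v})) (enumerations (Suc m) V)"
proof (rule bij_betw_byWitness[where f' = "\<lambda>\<tau>. (\<tau> (Suc m), \<tau>(Suc m := Suc m))"])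
  show "\<forall>p\<in>SIGMA v:V. enumerations m (V - {v}).
      (\<lambda>\<tau>. (\<tau> (Suc m), \<tau>(Suc m := Suc m))) ((\<lambda>(v, \<tau>). \<tau>(Suc m := v)) p) = p"
    by (auto simp: enumerations_def fun_eq_iff)
  show "(\<lambda>(v, \<tau>). \<tau>(Suc m := v)) ` (SIGMA v:V. enumerations m (V - {v})) \<subseteq> enumerations (Suc m) V"
  proof clarify
    fix v \<tau> assume "v \<in> V" "\<tau> \<in> enumerations m (V - {v})"
    then show "\<tau>(Suc m := v) \<in> enumerations (Suc m) V"
      unfolding enumerations_def mem_Collect_eq bij_betw_fun_upd_Suc_iff[OF \<open>v \<in> V\<close>] by auto
  qed
  show "(\<lambda>\<tau>. (\<tau> (Suc m), \<tau>(Suc m := Suc m))) ` enumerations (Suc m) V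
      \<subseteq> (SIGMA v:V. enumerations m (V - {v}))"
  proof clarify
    fix \<tau> assume \<tau>: "\<tau> \<in> enumerations (Suc m) V"
    then have v: "\<tau> (Suc m) \<in> V"
      by (auto simp: enumerations_def bij_betw_def)
    from \<tau> have "bij_betw (\<tau>(Suc m := Suc m, Suc m := \<tau> (Suc m))) {1..Suc m} V"
      by (simp add: enumerations_def)
    with \<tau> show "\<tau> (Suc m) \<in> V \<and> \<tau>(Suc m := Suc m) \<in> enumerations m (V - {\<tau> (Suc m)})"
      unfolding bij_betw_fun_upd_Suc_iff[OF v] by (auto simp: v enumerations_def)
  qed
qed auto

lemma card_inversion_pairs_fun_upd_Suc:
  assumes "\<tau> \<in> enumerations m (V - {v})"
  shows "card (inversion_pairs (Suc m) (\<tau>(Suc m := v))) = card (inversion_pairs m \<tau>) + card {u \<in> V. v < u}"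
proof -
  have inj: "inj_on \<tau> {1..m}" and img: "\<tau> ` {1..m} = V - {v}"
    using assms by (simp_all add: enumerations_def bij_betw_def)
  have "card {a \<in> {1..m}. v < \<tau> a} = card (\<tau> ` {a \<in> {1..m}. v < \<tau> a})"
    by (rule card_image[symmetric], rule inj_on_subset[OF inj]) blast
  also have "\<tau> ` {a \<in> {1..m}. v < \<tau> a} = {u \<in> \<tau> ` {1..m}. v < u}"
    by blast
  also have "\<dots> = {u \<in> V. v < u}"
    unfolding img by blast
  finally have greater: "card {a \<in> {1..m}. v < \<tau> a} = card {u \<in> V. v < u}" .
  have "{a \<in> {1..m}. (\<tau>(Suc m := v)) (Suc m) < (\<tau>(Suc m := v)) a} = {a \<in> {1..m}. v < \<tau> a}"
    by auto
  moreover have "inversion_pairs m (\<tau>(Suc m := v)) = inversion_pairs m \<tau>"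
    by (auto simp: inversion_pairs_def)
  ultimately show ?thesis
    by (simp only: card_inversion_pairs_Suc greater)
qed

lemma sum_enumerations_inversion_pairs:
  assumes "finite V" "card V = n"
  shows "(\<Sum>\<tau>\<in>enumerations n V. q ^ card (inversion_pairs n \<tau>)) = qfact q n"
  using assms
proof (induction n arbitrary: V)
  case 0
  then have "enumerations 0 V = {id}"
    by (auto simp: enumerations_def fun_eq_iff)
  then show ?case by (simp add: qfact_def)
next
  case (Suc m)
  have "(\<Sum>\<tau>\<in>enumerations (Suc m) V. q ^ card (inversion_pairs (Suc m) \<tau>)) =
      (\<Sum>(v, \<tau>)\<in>(SIGMA v:V. enumerations m (V - {v})). q ^ card (inversion_pairs (Suc m) (\<tau>(Suc m := v))))"
    using sum.reindex_bij_betw[OF bij_betw_enumerations_Suc, of "\<lambda>\<tau>. q ^ card (inversion_pairs (Suc m) \<tau>)"]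
    by (simp add: case_prod_unfold)
  also have "\<dots> = (\<Sum>(v, \<tau>)\<in>(SIGMA v:V. enumerations m (V - {v})).
      q ^ card {u \<in> V. v < u} * q ^ card (inversion_pairs m \<tau>))"
    by (intro sum.cong refl) (auto simp: card_inversion_pairs_fun_upd_Suc power_add)
  also have "\<dots> = (\<Sum>v\<in>V. \<Sum>\<tau>\<in>enumerations m (V - {v}).
      q ^ card {u \<in> V. v < u} * q ^ card (inversion_pairs m \<tau>))"
    using Suc.prems(1) by (simp add: sum.Sigma finite_enumerations)
  also have "\<dots> = (\<Sum>v\<in>V. q ^ card {u \<in> V. v < u}) * qfact q m"
    using Suc by (simp add: sum_distrib_left[symmetric] sum_distrib_right)
  also have "\<dots> = qfact q (Suc m)"
    using Suc.prems by (simp add: sum_power_card_greater qfact_def)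
  finally show ?case .
qed

section \<open>Evaluation of the integrals\<close>

lemma S_fac_at_0: "c \<noteq> 0 \<Longrightarrow> S_fac q c 0 = q"
  by (simp add: S_fac_def)

lemma S_fac_denominator_nonzero:
  fixes q x y :: complex
  assumes "cmod q + cmod (1 - q) * r < 1" "0 < r" "cmod x = r" "cmod y \<le> r"
  shows "x - q * y - (1 - q) * x * y \<noteq> 0"
proof
  assume "x - q * y - (1 - q) * x * y = 0"
  then have "x = y * (q + (1 - q) * x)"
    by (simp add: algebra_simps)
  then have "r = cmod y * cmod (q + (1 - q) * x)"
    using assms(3) by (metis norm_mult)
  also have "\<dots> \<le> r * (cmod q + cmod (1 - q) * r)"
    using assms(2-4) norm_triangle_ineq[of q "(1 - q) * x"]
    by (intro mult_mono) (auto simp: norm_mult)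
  also have "\<dots> < r"
    using assms(1,2) by simp
  finally show False by simp
qed

definition inversion_integrand ::
    "complex \<Rightarrow> nat \<Rightarrow> (nat \<Rightarrow> nat) \<Rightarrow> (nat \<Rightarrow> complex) \<Rightarrow> complex" where
  "inversion_integrand q n \<tau> z =
     (\<Prod>(a, b)\<in>inversion_pairs n \<tau>. S_fac q (z a) (z b)) * (\<Prod>i=1..n. inverse (z i))"

lemma A_sigma_integrand:
  "A_sigma q n \<sigma> z * (\<Prod>i=1..n. inverse (z i)) = inversion_integrand q n (inv \<sigma>) z"
  by (simp add: A_sigma_def inversion_integrand_def inversions_eq_inversion_pairs)

context
  fixes q :: complex and r :: real
  assumes small_radius: "cmod q + cmod (1 - q) * r < 1" and r_pos: "0 < r"
begin

lemma continuous_on_inversion_integrand: "continuous_on (torus r n) (inversion_integrand q n \<tau>)"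
  unfolding inversion_integrand_def
proof (intro continuous_intros)
  fix p assume "p \<in> inversion_pairs n \<tau>"
  then obtain a b where p: "p = (a, b)" "a \<in> {1..n}" "b \<in> {1..n}"
    using inversion_pairs_subset by blast
  have "z a - q * z b - (1 - q) * z a * z b \<noteq> 0" if "z \<in> torus r n" for z
    using that p by (intro S_fac_denominator_nonzero[OF small_radius r_pos]) (auto simp: torus_def)
  then show "continuous_on (torus r n) (\<lambda>z. case p of (a, b) \<Rightarrow> S_fac q (z a) (z b))"
    unfolding p S_fac_def by (auto intro!: continuous_intros)
qed (use r_pos in \<open>force simp: torus_def\<close>)

lemma circle_integral_inversion_integrand_Suc:
  assumes z: "z \<in> torus r m"
  shows "circle_integral r (\<lambda>w. inversion_integrand q (Suc m) \<tau> (z(Suc m := w))) =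
     2 * of_real pi * \<i> * q ^ card {a \<in> {1..m}. \<tau> (Suc m) < \<tau> a} * inversion_integrand q m \<tau> z"
proof -
  define J where "J = {a \<in> {1..m}. \<tau> (Suc m) < \<tau> a}"
  define \<Psi> where "\<Psi> w = (\<Prod>a\<in>J. S_fac q (z a) w)" for w
  have z_norm: "cmod (z a) = r" if "a \<in> J" for a
    using z that by (auto simp: torus_def J_def)
  have "(\<Prod>(a, b)\<in>inversion_pairs (Suc m) \<tau>. S_fac q ((z(Suc m := w)) a) ((z(Suc m := w)) b)) =
        (\<Prod>(a, b)\<in>inversion_pairs m \<tau>. S_fac q (z a) (z b)) * \<Psi> w" for w
    unfolding prod_inversion_pairs_Suc \<Psi>_def J_def
    by (intro arg_cong2[where f = "(*)"] prod.cong) (auto simp: inversion_pairs_def)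
  moreover have "(\<Prod>i=1..Suc m. inverse ((z(Suc m := w)) i)) = (\<Prod>i=1..m. inverse (z i)) * inverse w" for w
  proof -
    have "(\<Prod>i=1..m. inverse ((z(Suc m := w)) i)) = (\<Prod>i=1..m. inverse (z i))"
      by (intro prod.cong) auto
    then show ?thesis by (simp add: prod.cl_ivl_Suc)
  qed
  ultimately have integrand: "inversion_integrand q (Suc m) \<tau> (z(Suc m := w)) =
      inversion_integrand q m \<tau> z * (\<Psi> w / w)" for w
    by (simp add: inversion_integrand_def divide_inverse ac_simps)
  have "\<Psi> holomorphic_on cball 0 r"
    unfolding \<Psi>_def S_fac_def
    by (intro holomorphic_intros) (use S_fac_denominator_nonzero[OF small_radius r_pos z_norm] in force)
  then have "circle_integral r (\<lambda>w. inversion_integrand q m \<tau> z * (\<Psi> w / w)) =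
      inversion_integrand q m \<tau> z * (2 * of_real pi * \<i> * \<Psi> 0)"
    by (simp only: circle_integral_cmult circle_integral_Cauchy r_pos)
  moreover have "\<Psi> 0 = (\<Prod>a\<in>J. q)"
    unfolding \<Psi>_def using r_pos z_norm by (intro prod.cong refl S_fac_at_0) force
  ultimately show ?thesis
    unfolding integrand by (simp add: J_def)
qed

lemma multi_circle_integral_inversion_integrand:
  "multi_circle_integral r n (inversion_integrand q n \<tau>) =
   (2 * of_real pi * \<i>) ^ n * q ^ card (inversion_pairs n \<tau>)"
proof (induction n)
  case 0
  then show ?case by (simp add: inversion_integrand_def)
next
  case (Suc m)
  define c where "c = 2 * of_real pi * \<i> * q ^ card {a \<in> {1..m}. \<tau> (Suc m) < \<tau> a}"
  have "continuous_on {z(Suc m := w) | z w. z \<in> torus r m \<and> w \<in> sphere 0 r} (inversion_integrand q (Suc m) \<tau>)"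
    by (rule continuous_on_subset[OF continuous_on_inversion_integrand]) (auto intro: fun_upd_in_torus)
  then have "multi_circle_integral r (Suc m) (inversion_integrand q (Suc m) \<tau>) =
      multi_circle_integral r m
        (\<lambda>z. circle_integral r (\<lambda>w. inversion_integrand q (Suc m) \<tau> (z(Suc m := w))))"
    using circle_integral_multi_circle_integral_swap[of "Suc m" m r] r_pos by simp
  also have "\<dots> = multi_circle_integral r m (\<lambda>z. c * inversion_integrand q m \<tau> z)"
    unfolding c_def using r_pos
    by (intro multi_circle_integral_cong circle_integral_inversion_integrand_Suc) simp_all
  also have "\<dots> = (2 * of_real pi * \<i>) ^ Suc m * q ^ card (inversion_pairs (Suc m) \<tau>)"
    unfolding multi_circle_integral_cmult Suc.IH by (simp add: c_def card_inversion_pairs_Suc power_add)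
  finally show ?case .
qed

end

theorem lemma3:
  fixes n :: nat and q :: complex and r :: real
  assumes "n \<ge> 1" and "0 < norm q" and "norm q < 1"
    and "0 < r" and "r < (1 - norm q) / norm (1 - q)"
  shows "(\<Sum>\<sigma>\<in>{\<sigma>. \<sigma> permutes {1..n}}.
            (1 / (2 * of_real pi * \<i>)) ^ n *
            multi_circle_integral r n (\<lambda>z. A_sigma q n \<sigma> z * (\<Prod>i=1..n. inverse (z i))))
         = qfact q n"
proof -
  have "cmod (1 - q) > 0"
    using assms(3) by auto
  then have small_radius: "cmod q + cmod (1 - q) * r < 1"
    using assms(5) by (simp add: pos_less_divide_eq algebra_simps)
  have termwise: "(1 / (2 * of_real pi * \<i>)) ^ n *
      multi_circle_integral r n (\<lambda>z. A_sigma q n \<sigma> z * (\<Prod>i=1..n. inverse (z i))) =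
      q ^ card (inversion_pairs n (inv \<sigma>))" for \<sigma>
    unfolding A_sigma_integrand multi_circle_integral_inversion_integrand[OF small_radius assms(4)]
    by (simp add: power_one_over)
  have "(\<Sum>\<sigma>\<in>{\<sigma>. \<sigma> permutes {1..n}}. q ^ card (inversion_pairs n (inv \<sigma>))) =
      (\<Sum>\<tau>\<in>enumerations n {1..n}. q ^ card (inversion_pairs n \<tau>))"
    unfolding enumerations_interval by (rule sum_permutations_inverse[symmetric])
  also have "\<dots> = qfact q n"
    by (rule sum_enumerations_inversion_pairs) simp_all
  finally show ?thesis
    unfolding termwise .
qed

end
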